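(* Consider the two-route traffic model with affine routing ratios described in the context, with penetration rate $\alpha\in[0,1]$ and equilibrium $\overline{x}(\alpha)$, and assume that for every $\alpha\in[0,1]$ there is no unsatisfied demand at equilibrium, i.e., $\phi R_\ell(\overline{x}(\alpha))\le F_\ell$ for $\ell=1,2$. Let $J(x)=\phi R_1(x)\frac{x_1}{B_1}+\phi R_2(x)\frac{x_2}{B_2}$, and define $\xi_1=\frac{E_1}{E_1+E_2}$, $\xi_2=\frac{E_1E_2+E_1(F_1+F_2)}{2E_1E_2+(E_1+E_2)(F_1+F_2)}$, $\overline{\alpha}=\frac{2(r_1^0(E_1+E_2)-E_1)}{(2r_1^0-1)(E_1+E_2)}$, $\overline{\phi}=\frac{E_1E_2(1-2r_1^0)}{r_1^0(E_1+E_2)-E_1}$. Suppose $E_1\ge E_2$. Then: (a) if $r_1^0<1/2$, $\alpha\mapsto J(\overline{x}(\alpha))$ is decreasing on $[0,1]$; (b) if $1/2\le r_1^0\le\xi_2$ and $\phi<\overline{\phi}$, it is increasing on $[0,1]$; (c) if $1/2\le r_1^0\le\xi_2$ and $\phi\ge\overline{\phi}$, it is decreasing on $[0,1]$; (d) if $\xi_2\le r_1^0\le\xi_1$, it is increasing on $[0,1]$; (e) if $r_1^0\ge\xi_1$, it is increasing for $\alpha\in(\overline{\alpha},1]$ and attains its minimum at $\alpha=\overline{\alpha}$. Suppose instead $E_1<E_2$. Then: (f) if $r_1^0\le\xi_1$, $\alpha\mapsto J(\overline{x}(\alpha))$ is increasing for $\alpha\in(\overline{\alpha},1]$ and attains its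 minimum at $\alpha=\overline{\alpha}$; (g) if $\xi_1<r_1^0\le\xi_2$, it is increasing on $[0,1]$; (h) if $\xi_2<r_1^0\le1/2$ and $\phi<\overline{\phi}$, it is increasing on $[0,1]$; (i) if $\xi_2<r_1^0\le1/2$ and $\phi\ge\overline{\phi}$, it is decreasing on $[0,1]$; (j) if $r_1^0>1/2$, it is decreasing on $[0,1]$.
   Context: Two routes $i=1,2$ connect an origin to a destination, with positive parameters $B_i$ (jam density), $C_i$ (critical density), $F_i$ (capacity), $C_i<B_i$, and constant demand $\phi>0$. Set $v_i=F_i/C_i$ and $E_i=v_iB_i$. The state $x=(x_1,x_2)\in\Omega:=[0,B_1]\times[0,B_2]$ evolves by $\dot x_i=\min\{\phi R_i(x),S_i(x_i)\}-D_i(x_i)$, with $S_i(x_i)=F_i$ if $x_i<C_i$, $S_i(x_i)=\frac{F_i}{B_i-C_i}(B_i-x_i)$ otherwise; $D_i(x_i)=v_ix_i$ if $x_i<C_i$, $D_i(x_i)=F_i$ otherwise. The routing ratios are affine: with penetration rate $\alpha$ and constants $r_1^0,r_2^0\ge0$, $r_1^0+r_2^0=1$, $R_1(x)=(1-\alpha)r_1^0+\alpha\big(\tfrac12+\tfrac12(\tfrac{x_2}{B_2}-\tfrac{x_1}{B_1})\big)$, $R_2(x)=(1-\alpha)r_2^0+\alpha\big(\tfrac12+\tfrac12(\tfrac{x_1}{B_1}-\tfrac{x_2}{B_2})\big)$. Standing assumptions: $\phi<F_1+F_2$; $F_i>(1-\alpha)\phi r_i^0$ for $i=1,2$; $\phi<E_i$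 for $i=1,2$. The system has, for each $\alpha$, a unique equilibrium $\overline{x}(\alpha)\in\Omega$. *)

theory Defs
  imports Complex_Main
begin

text \<open>Parameters: jam densities B1 B2, critical densities C1 C2, capacities F1 F2,
  demandf phi, baseline routing ratios r1 r2, penetration rate alpha.\<close>

definition supplyf :: "real \<Rightarrow> real \<Rightarrow> real \<Rightarrow> real \<Rightarrow> real" where
  "supplyf B C F y = (if y < C then F else F / (B - C) * (B - y))"

definition demandf :: "real \<Rightarrow> real \<Rightarrow> real \<Rightarrow> real" where
  "demandf C F y = (if y < C then (F / C) * y else F)"

definition Ecap :: "real \<Rightarrow> real \<Rightarrow> real \<Rightarrow> real" where
  "Ecap B C F = (F / C) * B"

definition R1 :: "real \<Rightarrow> real \<Rightarrow> real \<Rightarrow> real \<Rightarrow> real \<times> real \<Rightarrow> real" where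
  "R1 B1 B2 r1 \<alpha> x = (1 - \<alpha>) * r1 + \<alpha> * (1/2 + 1/2 * (snd x / B2 - fst x / B1))"

definition R2 :: "real \<Rightarrow> real \<Rightarrow> real \<Rightarrow> real \<Rightarrow> real \<times> real \<Rightarrow> real" where
  "R2 B1 B2 r2 \<alpha> x = (1 - \<alpha>) * r2 + \<alpha> * (1/2 + 1/2 * (fst x / B1 - snd x / B2))"

definition Omega :: "real \<Rightarrow> real \<Rightarrow> (real \<times> real) set" where
  "Omega B1 B2 = {0..B1} \<times> {0..B2}"

definition is_equilibrium ::
  "real \<Rightarrow> real \<Rightarrow> real \<Rightarrow> real \<Rightarrow> real \<Rightarrow> real \<Rightarrow> real \<Rightarrow> real \<Rightarrow> real \<Rightarrow> real
   \<Rightarrow> real \<times> real \<Rightarrow> bool" where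
  "is_equilibrium B1 B2 C1 C2 F1 F2 \<phi> r1 r2 \<alpha> x \<longleftrightarrow>
     x \<in> Omega B1 B2 \<and>
     min (\<phi> * R1 B1 B2 r1 \<alpha> x) (supplyf B1 C1 F1 (fst x)) - demandf C1 F1 (fst x) = 0 \<and>
     min (\<phi> * R2 B1 B2 r2 \<alpha> x) (supplyf B2 C2 F2 (snd x)) - demandf C2 F2 (snd x) = 0"

definition xbar ::
  "real \<Rightarrow> real \<Rightarrow> real \<Rightarrow> real \<Rightarrow> real \<Rightarrow> real \<Rightarrow> real \<Rightarrow> real \<Rightarrow> real \<Rightarrow> real
   \<Rightarrow> real \<times> real" where
  "xbar B1 B2 C1 C2 F1 F2 \<phi> r1 r2 \<alpha> = (THE x. is_equilibrium B1 B2 C1 C2 F1 F2 \<phi> r1 r2 \<alpha> x)"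

definition Jcost :: "real \<Rightarrow> real \<Rightarrow> real \<Rightarrow> real \<Rightarrow> real \<Rightarrow> real \<Rightarrow> real \<times> real \<Rightarrow> real" where
  "Jcost B1 B2 \<phi> r1 r2 \<alpha> x =
     \<phi> * R1 B1 B2 r1 \<alpha> x * (fst x / B1) + \<phi> * R2 B1 B2 r2 \<alpha> x * (snd x / B2)"

definition xi1 :: "real \<Rightarrow> real \<Rightarrow> real" where
  "xi1 E1 E2 = E1 / (E1 + E2)"

definition xi2 :: "real \<Rightarrow> real \<Rightarrow> real \<Rightarrow> real \<Rightarrow> real" where
  "xi2 E1 E2 F1 F2 = (E1 * E2 + E1 * (F1 + F2)) / (2 * E1 * E2 + (E1 + E2) * (F1 + F2))"

definition alphabar :: "real \<Rightarrow> real \<Rightarrow> real \<Rightarrow> real" where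
  "alphabar E1 E2 r1 = 2 * (r1 * (E1 + E2) - E1) / ((2 * r1 - 1) * (E1 + E2))"

definition phibar :: "real \<Rightarrow> real \<Rightarrow> real \<Rightarrow> real" where
  "phibar E1 E2 r1 = E1 * E2 * (1 - 2 * r1) / (r1 * (E1 + E2) - E1)"

definition incr_on :: "real set \<Rightarrow> (real \<Rightarrow> real) \<Rightarrow> bool" where
  "incr_on A f \<longleftrightarrow> (\<forall>a\<in>A. \<forall>b\<in>A. a \<le> b \<longrightarrow> f a \<le> f b)"

definition decr_on :: "real set \<Rightarrow> (real \<Rightarrow> real) \<Rightarrow> bool" where
  "decr_on A f \<longleftrightarrow> (\<forall>a\<in>A. \<forall>b\<in>A. a \<le> b \<longrightarrow> f b \<le> f a)"

end

theory Submission
  imports Defs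
begin

(* Without unsatisfied demand every equilibrium is in free flow, so x_i / B_i = phi R_i / E_i.
   The routing ratio R = R1(xbar alpha) then solves a linear equation, whose solution is the
   Moebius function R - xi1 = ((r1 - xi1) + (1/2 - r1) alpha) / (1 + c alpha) with
   c = phi (1/E1 + 1/E2) / 2, and completing the square gives
   J = phi^2 / (E1 + E2) + phi^2 (1/E1 + 1/E2) (R - xi1)^2.
   Hence J increases where R - xi1 has the sign of the determinant (1/2 - r1) - (r1 - xi1) c
   and decreases where the signs differ.  The thresholds of the theorem are where these signs
   change: alphabar is the zero of R - xi1, phibar the value of phi at which the determinant
   vanishes, and xi2 the value of r1 at which it vanishes for phi = F1 + F2. *)

lemma free_flow_at_equilibrium:
  fixes B C F p y :: real
  assumes balance: "min p (supplyf B C F y) = demandf C F y"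
    and "p \<le> F" "0 \<le> y" "0 < C" "C < B" "0 < F"
  shows "F / C * y = p"
proof (cases "y < C")
  case True
  then show ?thesis using balance \<open>p \<le> F\<close> by (auto simp: supplyf_def demandf_def min_def split: if_splits)
next
  case False
  then have supply_eq: "supplyf B C F y = F / (B - C) * (B - y)" and demand_eq: "demandf C F y = F"
    by (simp_all add: supplyf_def demandf_def)
  have "F / (B - C) * (B - y) \<le> F"
    using False assms(4-6) by (simp add: field_simps)
  then have "p = F" "F / (B - C) * (B - y) = F"
    using balance \<open>p \<le> F\<close> unfolding supply_eq demand_eq by (auto simp: min_def split: if_splits)
  then have "y = C"
    using assms(5,6) by (simp add: field_simps)
  then show ?thesis using \<open>p = F\<close> assms(4) by simp
qed

lemma equilibrium_occupancy:
  fixes B1 B2 C1 C2 F1 F2 \<phi> r1 r2 \<alpha> :: real and x :: "real \<times> real"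
  assumes pos: "0 < C1" "0 < C2" "0 < F1" "0 < F2" and crit: "C1 < B1" "C2 < B2"
    and eq: "is_equilibrium B1 B2 C1 C2 F1 F2 \<phi> r1 r2 \<alpha> x"
    and demand1: "\<phi> * R1 B1 B2 r1 \<alpha> x \<le> F1" and demand2: "\<phi> * R2 B1 B2 r2 \<alpha> x \<le> F2"
  shows "fst x / B1 = \<phi> * R1 B1 B2 r1 \<alpha> x / Ecap B1 C1 F1"
    and "snd x / B2 = \<phi> * R2 B1 B2 r2 \<alpha> x / Ecap B2 C2 F2"
proof -
  have "0 \<le> fst x" "0 \<le> snd x"
    using eq unfolding is_equilibrium_def Omega_def by (auto simp: mem_Times_iff)
  moreover have
    "min (\<phi> * R1 B1 B2 r1 \<alpha> x) (supplyf B1 C1 F1 (fst x)) = demandf C1 F1 (fst x)"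
    "min (\<phi> * R2 B1 B2 r2 \<alpha> x) (supplyf B2 C2 F2 (snd x)) = demandf C2 F2 (snd x)"
    using eq unfolding is_equilibrium_def by simp_all
  ultimately have "F1 / C1 * fst x = \<phi> * R1 B1 B2 r1 \<alpha> x" "F2 / C2 * snd x = \<phi> * R2 B1 B2 r2 \<alpha> x"
    using free_flow_at_equilibrium demand1 demand2 pos crit by blast+
  then show "fst x / B1 = \<phi> * R1 B1 B2 r1 \<alpha> x / Ecap B1 C1 F1"
    and "snd x / B2 = \<phi> * R2 B1 B2 r2 \<alpha> x / Ecap B2 C2 F2"
    using pos crit unfolding Ecap_def by (auto simp: field_simps)
qed

lemma R2_eq_one_minus_R1:
  assumes "r1 + r2 = 1"
  shows "R2 B1 B2 r2 \<alpha> x = 1 - R1 B1 B2 r1 \<alpha> x"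
proof -
  have r2: "r2 = 1 - r1" using assms by simp
  show ?thesis unfolding R1_def R2_def r2 by (simp add: algebra_simps)
qed

lemma routing_ratio_solution:
  fixes E1 E2 \<phi> r1 \<alpha> R :: real
  assumes "0 < E1" "0 < E2" "0 < \<phi>" "0 \<le> \<alpha>"
    and fixed_point: "R = (1 - \<alpha>) * r1 + \<alpha> * (1/2 + 1/2 * (\<phi> * (1 - R) / E2 - \<phi> * R / E1))"
  shows "R - xi1 E1 E2 = ((r1 - xi1 E1 E2) + (1/2 - r1) * \<alpha>) / (1 + \<phi> * (1/E1 + 1/E2) / 2 * \<alpha>)"
proof -
  have "E1 + E2 \<noteq> 0" using assms by simp
  then have "xi1 E1 E2 * (1/E1 + 1/E2) = 1/E2"
    using assms unfolding xi1_def by (simp add: divide_simps)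
  then have "(R - xi1 E1 E2) * (1 + \<phi> * (1/E1 + 1/E2) / 2 * \<alpha>) = (r1 - xi1 E1 E2) + (1/2 - r1) * \<alpha>"
    using fixed_point unfolding divide_inverse by algebra
  moreover have "0 < 1 + \<phi> * (1/E1 + 1/E2) / 2 * \<alpha>"
    using assms by (simp add: add_pos_nonneg)
  ultimately show ?thesis by (simp add: eq_divide_eq)
qed

lemma two_route_cost_identity:
  fixes E1 E2 R :: real
  assumes "0 < E1" "0 < E2"
  shows "R\<^sup>2 / E1 + (1 - R)\<^sup>2 / E2 = 1 / (E1 + E2) + (1/E1 + 1/E2) * (R - xi1 E1 E2)\<^sup>2"
proof -
  have "E1 + E2 \<noteq> 0" using assms by simp
  then show ?thesis using assms unfolding xi1_def by (simp add: divide_simps) algebra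
qed

lemma Jcost_at_equilibrium:
  fixes B1 B2 C1 C2 F1 F2 \<phi> r1 r2 \<alpha> E1 E2 :: real and x :: "real \<times> real"
  assumes pos: "0 < B1" "0 < B2" "0 < C1" "0 < C2" "0 < F1" "0 < F2" "0 < \<phi>"
    and crit: "C1 < B1" "C2 < B2" and r: "r1 + r2 = 1"
    and E1_def: "E1 = Ecap B1 C1 F1" and E2_def: "E2 = Ecap B2 C2 F2"
    and "0 \<le> \<alpha>"
    and eq: "is_equilibrium B1 B2 C1 C2 F1 F2 \<phi> r1 r2 \<alpha> x"
    and demand1: "\<phi> * R1 B1 B2 r1 \<alpha> x \<le> F1" and demand2: "\<phi> * R2 B1 B2 r2 \<alpha> x \<le> F2"
  shows "Jcost B1 B2 \<phi> r1 r2 \<alpha> x = \<phi>\<^sup>2 / (E1 + E2) + \<phi>\<^sup>2 * (1/E1 + 1/E2) *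
     (((r1 - xi1 E1 E2) + (1/2 - r1) * \<alpha>) / (1 + \<phi> * (1/E1 + 1/E2) / 2 * \<alpha>))\<^sup>2"
proof -
  define R where "R = R1 B1 B2 r1 \<alpha> x"
  have E: "0 < E1" "0 < E2" using pos unfolding E1_def E2_def Ecap_def by auto
  have occ1: "fst x / B1 = \<phi> * R / E1" and occ2: "snd x / B2 = \<phi> * (1 - R) / E2"
    using equilibrium_occupancy[OF pos(3-6) crit eq demand1 demand2] R2_eq_one_minus_R1[OF r]
    unfolding R_def E1_def E2_def by simp_all
  have "R = (1 - \<alpha>) * r1 + \<alpha> * (1/2 + 1/2 * (snd x / B2 - fst x / B1))"
    unfolding R_def R1_def ..
  then have "R = (1 - \<alpha>) * r1 + \<alpha> * (1/2 + 1/2 * (\<phi> * (1 - R) / E2 - \<phi> * R / E1))"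
    unfolding occ1 occ2 .
  then have ratio: "R - xi1 E1 E2 = ((r1 - xi1 E1 E2) + (1/2 - r1) * \<alpha>) / (1 + \<phi> * (1/E1 + 1/E2) / 2 * \<alpha>)"
    using routing_ratio_solution E pos(7) \<open>0 \<le> \<alpha>\<close> by blast
  have "Jcost B1 B2 \<phi> r1 r2 \<alpha> x = \<phi>\<^sup>2 * (R\<^sup>2 / E1 + (1 - R)\<^sup>2 / E2)"
    unfolding Jcost_def occ1 occ2 R2_eq_one_minus_R1[OF r] by (simp add: R_def power2_eq_square field_simps)
  also have "\<dots> = \<phi>\<^sup>2 / (E1 + E2) + \<phi>\<^sup>2 * (1/E1 + 1/E2) * (R - xi1 E1 E2)\<^sup>2"
    by (simp add: two_route_cost_identity[OF E] algebra_simps)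
  finally show ?thesis unfolding ratio .
qed

lemma moebius_square_diff:
  fixes a b c s t :: real
  assumes "0 < 1 + c * s" "0 < 1 + c * t"
  shows "((a + b * t) / (1 + c * t))\<^sup>2 - ((a + b * s) / (1 + c * s))\<^sup>2 =
    (t - s) * ((b - a * c) * (a + b * s) * (1 + c * t) + (b - a * c) * (a + b * t) * (1 + c * s))
      / ((1 + c * s) * (1 + c * t))\<^sup>2"
  using assms by (simp add: divide_simps) algebra

lemma moebius_square_mono:
  fixes a b c s t :: real
  assumes "0 < 1 + c * s" "0 < 1 + c * t" "s \<le> t"
    and "0 \<le> (b - a * c) * (a + b * s)" "0 \<le> (b - a * c) * (a + b * t)"
  shows "((a + b * s) / (1 + c * s))\<^sup>2 \<le> ((a + b * t) / (1 + c * t))\<^sup>2"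
proof -
  have "0 \<le> (b - a * c) * (a + b * s) * (1 + c * t)" "0 \<le> (b - a * c) * (a + b * t) * (1 + c * s)"
    using assms by simp_all
  then have "0 \<le> (t - s) * ((b - a * c) * (a + b * s) * (1 + c * t) + (b - a * c) * (a + b * t) * (1 + c * s))
      / ((1 + c * s) * (1 + c * t))\<^sup>2"
    using assms(3) by simp
  then show ?thesis using moebius_square_diff[OF assms(1,2), of a b] by simp
qed

lemma moebius_square_antimono:
  fixes a b c s t :: real
  assumes "0 < 1 + c * s" "0 < 1 + c * t" "s \<le> t"
    and "(b - a * c) * (a + b * s) \<le> 0" "(b - a * c) * (a + b * t) \<le> 0"
  shows "((a + b * t) / (1 + c * t))\<^sup>2 \<le> ((a + b * s) / (1 + c * s))\<^sup>2"
proof -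
  have "(b - a * c) * (a + b * s) * (1 + c * t) \<le> 0" "(b - a * c) * (a + b * t) * (1 + c * s) \<le> 0"
    using assms by (simp_all add: mult_nonpos_nonneg)
  then have "(t - s) * ((b - a * c) * (a + b * s) * (1 + c * t) + (b - a * c) * (a + b * t) * (1 + c * s))
      / ((1 + c * s) * (1 + c * t))\<^sup>2 \<le> 0"
    using assms(3) by (simp add: divide_nonpos_nonneg mult_nonneg_nonpos)
  then show ?thesis using moebius_square_diff[OF assms(1,2), of a b] by simp
qed

lemma incr_on_scaled_moebius_square:
  fixes f :: "real \<Rightarrow> real" and a b c K0 K1 :: real
  assumes f: "\<forall>t\<in>A. f t = K0 + K1 * ((a + b * t) / (1 + c * t))\<^sup>2" and "0 \<le> K1"
    and "\<forall>t\<in>A. 0 < 1 + c * t" and "\<forall>t\<in>A. 0 \<le> (b - a * c) * (a + b * t)"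
  shows "incr_on A f"
  unfolding incr_on_def using assms by (auto intro!: mult_left_mono moebius_square_mono)

lemma decr_on_scaled_moebius_square:
  fixes f :: "real \<Rightarrow> real" and a b c K0 K1 :: real
  assumes f: "\<forall>t\<in>A. f t = K0 + K1 * ((a + b * t) / (1 + c * t))\<^sup>2" and "0 \<le> K1"
    and "\<forall>t\<in>A. 0 < 1 + c * t" and "\<forall>t\<in>A. (b - a * c) * (a + b * t) \<le> 0"
  shows "decr_on A f"
  unfolding decr_on_def using assms by (auto intro!: mult_left_mono moebius_square_antimono)

lemma mult_affine_nonneg_on_unit_interval:
  fixes a b d t :: real
  assumes "t \<in> {0..1}" "0 \<le> d * a" "0 \<le> d * (a + b)"
  shows "0 \<le> d * (a + b * t)"
proof -
  have "0 \<le> (1 - t) * (d * a) + t * (d * (a + b))"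
    using assms by simp
  also have "\<dots> = d * (a + b * t)"
    by (simp add: algebra_simps)
  finally show ?thesis .
qed

lemma incr_on_unit_interval_scaled_moebius_square:
  fixes f :: "real \<Rightarrow> real" and a b c K0 K1 :: real
  assumes f: "\<forall>t\<in>{0..1}. f t = K0 + K1 * ((a + b * t) / (1 + c * t))\<^sup>2" and "0 \<le> K1" "0 \<le> c"
    and at_0: "0 \<le> (b - a * c) * a" and at_1: "0 \<le> (b - a * c) * (a + b)"
  shows "incr_on {0..1} f"
proof (rule incr_on_scaled_moebius_square[OF f \<open>0 \<le> K1\<close>])
  show "\<forall>t\<in>{0..1}. 0 < 1 + c * t" using \<open>0 \<le> c\<close> by (simp add: add_pos_nonneg)
  show "\<forall>t\<in>{0..1}. 0 \<le> (b - a * c) * (a + b * t)"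
    using at_0 at_1 mult_affine_nonneg_on_unit_interval by blast
qed

lemma decr_on_unit_interval_scaled_moebius_square:
  fixes f :: "real \<Rightarrow> real" and a b c K0 K1 :: real
  assumes f: "\<forall>t\<in>{0..1}. f t = K0 + K1 * ((a + b * t) / (1 + c * t))\<^sup>2" and "0 \<le> K1" "0 \<le> c"
    and at_0: "(b - a * c) * a \<le> 0" and at_1: "(b - a * c) * (a + b) \<le> 0"
  shows "decr_on {0..1} f"
proof (rule decr_on_scaled_moebius_square[OF f \<open>0 \<le> K1\<close>])
  show "\<forall>t\<in>{0..1}. 0 < 1 + c * t" using \<open>0 \<le> c\<close> by (simp add: add_pos_nonneg)
  show "\<forall>t\<in>{0..1}. (b - a * c) * (a + b * t) \<le> 0"
    using at_0 at_1 mult_affine_nonneg_on_unit_interval[of _ "- (b - a * c)" a b]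
    by (simp only: mult_minus_left neg_0_le_iff_le) blast
qed

lemma scaled_moebius_square_minimum_at_root:
  fixes f :: "real \<Rightarrow> real" and a b c K0 K1 r :: real
  assumes f: "\<forall>t\<in>{0..1}. f t = K0 + K1 * ((a + b * t) / (1 + c * t))\<^sup>2" and "0 \<le> K1" "0 \<le> c"
    and r: "r \<in> {0..1}" and root: "a + b * r = 0" and "0 \<le> (b - a * c) * b"
  shows "incr_on {r<..1} f" and "\<forall>t\<in>{0..1}. f r \<le> f t"
proof -
  have "a = - b * r" using root by simp
  then have factor: "(b - a * c) * (a + b * t) = (b - a * c) * b * (t - r)" for t
    by (simp add: algebra_simps)
  have "\<forall>t\<in>{r<..1}. 0 \<le> (b - a * c) * (a + b * t)"
    unfolding factor using \<open>0 \<le> (b - a * c) * b\<close> by simp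
  then show "incr_on {r<..1} f"
    using f r \<open>0 \<le> K1\<close> \<open>0 \<le> c\<close>
    by (intro incr_on_scaled_moebius_square[of _ _ K0 K1 a b c]) (auto simp: add_pos_nonneg)
  show "\<forall>t\<in>{0..1}. f r \<le> f t"
    using f r root \<open>0 \<le> K1\<close> by simp
qed

lemma neg_divide_mem_unit_interval:
  fixes x y :: real
  assumes "(0 \<le> x \<and> x + y \<le> 0) \<or> (x \<le> 0 \<and> 0 \<le> x + y)"
  shows "- x / y \<in> {0..1}"
  using assms by (cases y "0 :: real" rule: linorder_cases) (auto simp: field_simps)

locale two_route_equilibrium_cost =
  fixes E1 E2 F1 F2 \<phi> r1 :: real and J :: "real \<Rightarrow> real"
  assumes E1_pos: "0 < E1" and E2_pos: "0 < E2" and phi_pos: "0 < \<phi>"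
    and phi_less_capacity: "\<phi> < F1 + F2"
    and J_closed_form: "\<forall>\<alpha>\<in>{0..1}. J \<alpha> = \<phi>\<^sup>2 / (E1 + E2) + \<phi>\<^sup>2 * (1/E1 + 1/E2) *
      (((r1 - xi1 E1 E2) + (1/2 - r1) * \<alpha>) / (1 + \<phi> * (1/E1 + 1/E2) / 2 * \<alpha>))\<^sup>2"
begin

(* The determinant of the Moebius map in J_closed_form. *)
definition det :: real where
  "det = (1/2 - r1) - (r1 - xi1 E1 E2) * (\<phi> * (1/E1 + 1/E2) / 2)"

lemma moebius_slope_pos: "0 < \<phi> * (1/E1 + 1/E2) / 2"
  using E1_pos E2_pos phi_pos by (simp add: add_pos_pos)

lemma square_weight_nonneg: "0 \<le> \<phi>\<^sup>2 * (1/E1 + 1/E2)"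
  using E1_pos E2_pos by simp

lemma incr_on_if_det_signs:
  assumes "0 \<le> det * (r1 - xi1 E1 E2)" "0 \<le> det * (1/2 - xi1 E1 E2)"
  shows "incr_on {0..1} J"
  using incr_on_unit_interval_scaled_moebius_square[OF J_closed_form square_weight_nonneg less_imp_le[OF moebius_slope_pos]]
    assms unfolding det_def by simp

lemma decr_on_if_det_signs:
  assumes "det * (r1 - xi1 E1 E2) \<le> 0" "det * (1/2 - xi1 E1 E2) \<le> 0"
  shows "decr_on {0..1} J"
  using decr_on_unit_interval_scaled_moebius_square[OF J_closed_form square_weight_nonneg less_imp_le[OF moebius_slope_pos]]
    assms unfolding det_def by simp

lemma alphabar_eq: "alphabar E1 E2 r1 = - (r1 - xi1 E1 E2) / (1/2 - r1)"
proof -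
  have "0 < E1 + E2" using E1_pos E2_pos by simp
  then show ?thesis
    unfolding alphabar_def xi1_def by (cases "r1 = 1/2") (simp_all add: field_simps minus_divide_right)
qed

lemma minimum_at_alphabar:
  assumes "alphabar E1 E2 r1 \<in> {0..1}"
    and "r1 \<noteq> 1/2 \<or> r1 = xi1 E1 E2" \<comment> \<open>otherwise the junk value alphabar = 0 is no root\<close>
    and "0 \<le> det * (1/2 - r1)"
  shows "incr_on {alphabar E1 E2 r1<..1} J \<and> alphabar E1 E2 r1 \<in> {0..1} \<and>
    (\<forall>\<alpha>\<in>{0..1}. J (alphabar E1 E2 r1) \<le> J \<alpha>)"
proof -
  have "(r1 - xi1 E1 E2) + (1/2 - r1) * alphabar E1 E2 r1 = 0"
    using assms(2) unfolding alphabar_eq by auto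
  then show ?thesis
    using scaled_moebius_square_minimum_at_root[OF J_closed_form square_weight_nonneg less_imp_le[OF moebius_slope_pos]
        assms(1)] assms(1,3)
    unfolding det_def by simp
qed

lemma xi1_ge_half_iff: "1/2 \<le> xi1 E1 E2 \<longleftrightarrow> E2 \<le> E1"
proof -
  have "0 < E1 + E2" using E1_pos E2_pos by simp
  then show ?thesis unfolding xi1_def by (simp add: field_simps)
qed

lemma xi1_less_half_iff: "xi1 E1 E2 < 1/2 \<longleftrightarrow> E1 < E2"
  using xi1_ge_half_iff by (simp add: not_le[symmetric])

lemma xi2_denominator_pos: "0 < (E1 + E2) * (2 * E1 * E2 + (E1 + E2) * (F1 + F2))"
  using E1_pos E2_pos phi_pos phi_less_capacity by (simp add: add_pos_pos)

lemma xi1_minus_xi2: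
  "xi1 E1 E2 - xi2 E1 E2 F1 F2 =
    E1 * E2 * (E1 - E2) / ((E1 + E2) * (2 * E1 * E2 + (E1 + E2) * (F1 + F2)))"
proof -
  have "0 < E1 + E2" "0 < 2 * E1 * E2 + (E1 + E2) * (F1 + F2)"
    using xi2_denominator_pos E1_pos E2_pos by (simp_all add: zero_less_mult_iff)
  then show ?thesis unfolding xi1_def xi2_def by (simp add: divide_simps) algebra
qed

lemma xi2_le_xi1: "E2 \<le> E1 \<Longrightarrow> xi2 E1 E2 F1 F2 \<le> xi1 E1 E2"
  using xi1_minus_xi2 divide_nonneg_pos[OF _ xi2_denominator_pos, of "E1 * E2 * (E1 - E2)"]
    E1_pos E2_pos by simp

lemma xi2_less_xi1: "E2 < E1 \<Longrightarrow> xi2 E1 E2 F1 F2 < xi1 E1 E2"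
  using xi1_minus_xi2 divide_pos_pos[OF _ xi2_denominator_pos, of "E1 * E2 * (E1 - E2)"]
    E1_pos E2_pos by simp

lemma xi1_less_xi2: "E1 < E2 \<Longrightarrow> xi1 E1 E2 < xi2 E1 E2 F1 F2"
  using xi1_minus_xi2 divide_neg_pos[OF _ xi2_denominator_pos, of "E1 * E2 * (E1 - E2)"]
    E1_pos E2_pos by (simp add: mult_pos_neg)

lemma det_pos: "r1 \<le> xi1 E1 E2 \<Longrightarrow> r1 < 1/2 \<Longrightarrow> 0 < det"
  using moebius_slope_pos unfolding det_def by (smt (verit) mult_nonpos_nonneg)

lemma det_neg: "xi1 E1 E2 \<le> r1 \<Longrightarrow> 1/2 < r1 \<Longrightarrow> det < 0"
  using moebius_slope_pos unfolding det_def by (smt (verit) mult_nonneg_nonneg)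

lemma phibar_at_xi1: "phibar E1 E2 (xi1 E1 E2) = 0"
proof -
  have "E1 + E2 \<noteq> 0" using E1_pos E2_pos by simp
  then show ?thesis unfolding phibar_def xi1_def by simp
qed

lemma det_eq_phibar:
  assumes "r1 \<noteq> xi1 E1 E2"
  shows "2 * E1 * E2 * det = (r1 - xi1 E1 E2) * (E1 + E2) * (phibar E1 E2 r1 - \<phi>)"
proof -
  have "0 < E1 + E2" using E1_pos E2_pos by simp
  moreover have "r1 * (E1 + E2) - E1 \<noteq> 0"
    using assms \<open>0 < E1 + E2\<close> unfolding xi1_def by (simp add: field_simps)
  ultimately show ?thesis
    using E1_pos E2_pos unfolding det_def phibar_def xi1_def
    by (simp add: divide_simps) (simp add: algebra_simps)
qed

lemma det_neg_iff:
  assumes "r1 < xi1 E1 E2"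
  shows "det < 0 \<longleftrightarrow> \<phi> < phibar E1 E2 r1"
proof -
  define P where "P = (r1 - xi1 E1 E2) * (E1 + E2)"
  have "P < 0"
    using assms E1_pos E2_pos unfolding P_def by (simp add: mult_neg_pos)
  have "2 * E1 * E2 * det = P * (phibar E1 E2 r1 - \<phi>)"
    unfolding P_def using det_eq_phibar assms by simp
  moreover have "det < 0 \<longleftrightarrow> 2 * E1 * E2 * det < 0"
    using E1_pos E2_pos by (simp add: mult_less_0_iff)
  ultimately show ?thesis using \<open>P < 0\<close> by (simp add: mult_less_0_iff)
qed

lemma det_pos_iff:
  assumes "xi1 E1 E2 < r1"
  shows "0 < det \<longleftrightarrow> \<phi> < phibar E1 E2 r1"
proof -
  define P where "P = (r1 - xi1 E1 E2) * (E1 + E2)"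
  have "0 < P"
    using assms E1_pos E2_pos unfolding P_def by simp
  have "2 * E1 * E2 * det = P * (phibar E1 E2 r1 - \<phi>)"
    unfolding P_def using det_eq_phibar assms by simp
  moreover have "0 < det \<longleftrightarrow> 0 < 2 * E1 * E2 * det"
    using E1_pos E2_pos by (simp add: zero_less_mult_iff mult_less_0_iff)
  ultimately show ?thesis using \<open>0 < P\<close> by (simp add: zero_less_mult_iff)
qed

lemma det_eq_xi2:
  "2 * E1 * E2 * det =
    E1 * E2 * (E2 - E1) * (F1 + F2 - \<phi>) / (2 * E1 * E2 + (E1 + E2) * (F1 + F2))
    - (r1 - xi2 E1 E2 F1 F2) * (2 * E1 * E2 + \<phi> * (E1 + E2))"
proof -
  have "0 < E1 + E2" "0 < 2 * E1 * E2 + (E1 + E2) * (F1 + F2)"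
    using xi2_denominator_pos E1_pos E2_pos by (simp_all add: zero_less_mult_iff)
  then show ?thesis
    using E1_pos E2_pos unfolding det_def xi1_def xi2_def by (simp add: divide_simps) algebra
qed

lemma det_nonpos_above_xi2:
  assumes "E2 \<le> E1" "xi2 E1 E2 F1 F2 \<le> r1"
  shows "det \<le> 0"
proof -
  have "0 < 2 * E1 * E2 + (E1 + E2) * (F1 + F2)"
    using xi2_denominator_pos E1_pos E2_pos by (simp add: zero_less_mult_iff)
  then have "E1 * E2 * (E2 - E1) * (F1 + F2 - \<phi>) / (2 * E1 * E2 + (E1 + E2) * (F1 + F2)) \<le> 0"
    using assms E1_pos E2_pos phi_less_capacity
    by (intro divide_nonpos_pos mult_nonpos_nonneg mult_nonneg_nonpos) simp_all
  moreover have "0 \<le> (r1 - xi2 E1 E2 F1 F2) * (2 * E1 * E2 + \<phi> * (E1 + E2))"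
    using assms E1_pos E2_pos phi_pos by simp
  ultimately have "2 * E1 * E2 * det \<le> 0"
    unfolding det_eq_xi2 by linarith
  then show ?thesis using E1_pos E2_pos by (simp add: mult_le_0_iff)
qed

lemma det_pos_below_xi2:
  assumes "E1 < E2" "r1 \<le> xi2 E1 E2 F1 F2"
  shows "0 < det"
proof -
  have "0 < 2 * E1 * E2 + (E1 + E2) * (F1 + F2)"
    using xi2_denominator_pos E1_pos E2_pos by (simp add: zero_less_mult_iff)
  then have "0 < E1 * E2 * (E2 - E1) * (F1 + F2 - \<phi>) / (2 * E1 * E2 + (E1 + E2) * (F1 + F2))"
    using assms E1_pos E2_pos phi_less_capacity by simp
  moreover have "(r1 - xi2 E1 E2 F1 F2) * (2 * E1 * E2 + \<phi> * (E1 + E2)) \<le> 0"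
    using assms E1_pos E2_pos phi_pos by (simp add: mult_nonpos_nonneg)
  ultimately have "0 < 2 * E1 * E2 * det"
    unfolding det_eq_xi2 by linarith
  then show ?thesis using E1_pos E2_pos by (simp add: zero_less_mult_iff mult_less_0_iff)
qed

lemma cost_shape_if_E2_le_E1:
  assumes "E2 \<le> E1"
  shows "(r1 < 1/2 \<longrightarrow> decr_on {0..1} J) \<and>
    (1/2 \<le> r1 \<and> r1 \<le> xi2 E1 E2 F1 F2 \<and> \<phi> < phibar E1 E2 r1 \<longrightarrow> incr_on {0..1} J) \<and>
    (1/2 \<le> r1 \<and> r1 \<le> xi2 E1 E2 F1 F2 \<and> \<phi> \<ge> phibar E1 E2 r1 \<longrightarrow> decr_on {0..1} J) \<and>
    (xi2 E1 E2 F1 F2 \<le> r1 \<and> r1 \<le> xi1 E1 E2 \<longrightarrow> incr_on {0..1} J) \<and>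
    (r1 \<ge> xi1 E1 E2 \<longrightarrow>
       incr_on {alphabar E1 E2 r1<..1} J \<and> alphabar E1 E2 r1 \<in> {0..1} \<and>
       (\<forall>\<alpha>\<in>{0..1}. J (alphabar E1 E2 r1) \<le> J \<alpha>))"
proof -
  have half: "1/2 \<le> xi1 E1 E2" using assms xi1_ge_half_iff by simp
  have xi2: "xi2 E1 E2 F1 F2 \<le> xi1 E1 E2" using assms xi2_le_xi1 by simp
  have "decr_on {0..1} J" if "r1 < 1/2"
    using det_pos that half
    by (intro decr_on_if_det_signs mult_nonneg_nonpos) simp_all
  moreover have "incr_on {0..1} J" if "1/2 \<le> r1 \<and> r1 \<le> xi2 E1 E2 F1 F2 \<and> \<phi> < phibar E1 E2 r1"
  proof -
    have "r1 \<noteq> xi1 E1 E2" using that phibar_at_xi1 phi_pos by auto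
    then have "det < 0" using det_neg_iff that xi2 by simp
    then show ?thesis using that half xi2
      by (intro incr_on_if_det_signs mult_nonpos_nonpos) simp_all
  qed
  moreover have "decr_on {0..1} J" if "1/2 \<le> r1 \<and> r1 \<le> xi2 E1 E2 F1 F2 \<and> \<phi> \<ge> phibar E1 E2 r1"
  proof (cases "r1 = xi1 E1 E2")
    case True
    then have "E1 = E2" using that xi2_less_xi1 assms by force
    then have "xi1 E1 E2 = 1/2" using E1_pos unfolding xi1_def by simp
    then have "r1 - xi1 E1 E2 = 0" "1/2 - xi1 E1 E2 = 0" using True by simp_all
    then show ?thesis by (intro decr_on_if_det_signs) (simp_all only: mult_zero_right order_refl)
  next
    case False
    then have "0 \<le> det" using det_neg_iff that xi2 by simp
    then show ?thesis using that half xi2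
      by (intro decr_on_if_det_signs mult_nonneg_nonpos) simp_all
  qed
  moreover have "incr_on {0..1} J" if "xi2 E1 E2 F1 F2 \<le> r1 \<and> r1 \<le> xi1 E1 E2"
    using det_nonpos_above_xi2 assms that half
    by (intro incr_on_if_det_signs mult_nonpos_nonpos) simp_all
  moreover have "incr_on {alphabar E1 E2 r1<..1} J \<and> alphabar E1 E2 r1 \<in> {0..1} \<and>
      (\<forall>\<alpha>\<in>{0..1}. J (alphabar E1 E2 r1) \<le> J \<alpha>)" if "r1 \<ge> xi1 E1 E2"
  proof (rule minimum_at_alphabar)
    show "alphabar E1 E2 r1 \<in> {0..1}"
      unfolding alphabar_eq using that half by (intro neg_divide_mem_unit_interval) simp
    show "r1 \<noteq> 1/2 \<or> r1 = xi1 E1 E2" using that half by linarith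
    show "0 \<le> det * (1/2 - r1)"
      using det_nonpos_above_xi2 assms that half xi2 by (intro mult_nonpos_nonpos) simp_all
  qed
  ultimately show ?thesis by blast
qed

lemma cost_shape_if_E1_less_E2:
  assumes "E1 < E2"
  shows "(r1 \<le> xi1 E1 E2 \<longrightarrow>
       incr_on {alphabar E1 E2 r1<..1} J \<and> alphabar E1 E2 r1 \<in> {0..1} \<and>
       (\<forall>\<alpha>\<in>{0..1}. J (alphabar E1 E2 r1) \<le> J \<alpha>)) \<and>
    (xi1 E1 E2 < r1 \<and> r1 \<le> xi2 E1 E2 F1 F2 \<longrightarrow> incr_on {0..1} J) \<and>
    (xi2 E1 E2 F1 F2 < r1 \<and> r1 \<le> 1/2 \<and> \<phi> < phibar E1 E2 r1 \<longrightarrow> incr_on {0..1} J) \<and>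
    (xi2 E1 E2 F1 F2 < r1 \<and> r1 \<le> 1/2 \<and> \<phi> \<ge> phibar E1 E2 r1 \<longrightarrow> decr_on {0..1} J) \<and>
    (r1 > 1/2 \<longrightarrow> decr_on {0..1} J)"
proof -
  have half: "xi1 E1 E2 < 1/2" using assms xi1_less_half_iff by simp
  have xi2: "xi1 E1 E2 < xi2 E1 E2 F1 F2" using assms xi1_less_xi2 by simp
  have "incr_on {alphabar E1 E2 r1<..1} J \<and> alphabar E1 E2 r1 \<in> {0..1} \<and>
      (\<forall>\<alpha>\<in>{0..1}. J (alphabar E1 E2 r1) \<le> J \<alpha>)" if "r1 \<le> xi1 E1 E2"
  proof (rule minimum_at_alphabar)
    show "alphabar E1 E2 r1 \<in> {0..1}"
      unfolding alphabar_eq using that half by (intro neg_divide_mem_unit_interval) simp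
    show "r1 \<noteq> 1/2 \<or> r1 = xi1 E1 E2" using that half by linarith
    show "0 \<le> det * (1/2 - r1)"
      using det_pos that half by (intro mult_nonneg_nonneg) simp_all
  qed
  moreover have "incr_on {0..1} J" if "xi1 E1 E2 < r1 \<and> r1 \<le> xi2 E1 E2 F1 F2"
    using det_pos_below_xi2 assms that half
    by (intro incr_on_if_det_signs mult_nonneg_nonneg) simp_all
  moreover have "incr_on {0..1} J" if "xi2 E1 E2 F1 F2 < r1 \<and> r1 \<le> 1/2 \<and> \<phi> < phibar E1 E2 r1"
  proof -
    have "0 < det" using det_pos_iff that xi2 by simp
    then show ?thesis using that half xi2
      by (intro incr_on_if_det_signs mult_nonneg_nonneg) simp_all
  qed
  moreover have "decr_on {0..1} J" if "xi2 E1 E2 F1 F2 < r1 \<and> r1 \<le> 1/2 \<and> \<phi> \<ge> phibar E1 E2 r1"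
  proof -
    have "det \<le> 0" using det_pos_iff that xi2 by simp
    then show ?thesis using that half xi2
      by (intro decr_on_if_det_signs mult_nonpos_nonneg) simp_all
  qed
  moreover have "decr_on {0..1} J" if "r1 > 1/2"
    using det_neg that half
    by (intro decr_on_if_det_signs mult_nonpos_nonneg) simp_all
  ultimately show ?thesis by blast
qed

end

theorem proposition4:
  fixes B1 B2 C1 C2 F1 F2 \<phi> r1 r2 E1 E2 :: real
    and J :: "real \<Rightarrow> real"
  assumes pos: "B1 > 0" "B2 > 0" "C1 > 0" "C2 > 0" "F1 > 0" "F2 > 0" "\<phi> > 0"
    and crit: "C1 < B1" "C2 < B2"
    and r: "r1 \<ge> 0" "r2 \<ge> 0" "r1 + r2 = 1"
    and E1_def: "E1 = Ecap B1 C1 F1" and E2_def: "E2 = Ecap B2 C2 F2"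
    and cap: "\<phi> < F1 + F2"
    and capr: "\<forall>\<alpha>\<in>{0..1}. F1 > (1 - \<alpha>) * \<phi> * r1 \<and> F2 > (1 - \<alpha>) * \<phi> * r2"
    and phiE: "\<phi> < E1" "\<phi> < E2"
    and uniq: "\<forall>\<alpha>\<in>{0..1}. \<exists>!x. is_equilibrium B1 B2 C1 C2 F1 F2 \<phi> r1 r2 \<alpha> x"
    and nounsat: "\<forall>\<alpha>\<in>{0..1}.
        \<phi> * R1 B1 B2 r1 \<alpha> (xbar B1 B2 C1 C2 F1 F2 \<phi> r1 r2 \<alpha>) \<le> F1 \<and>
        \<phi> * R2 B1 B2 r2 \<alpha> (xbar B1 B2 C1 C2 F1 F2 \<phi> r1 r2 \<alpha>) \<le> F2"
    and J_def: "J = (\<lambda>\<alpha>. Jcost B1 B2 \<phi> r1 r2 \<alpha> (xbar B1 B2 C1 C2 F1 F2 \<phi> r1 r2 \<alpha>))"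
  shows
   "(E1 \<ge> E2 \<longrightarrow>
      (r1 < 1/2 \<longrightarrow> decr_on {0..1} J) \<and>
      (1/2 \<le> r1 \<and> r1 \<le> xi2 E1 E2 F1 F2 \<and> \<phi> < phibar E1 E2 r1 \<longrightarrow> incr_on {0..1} J) \<and>
      (1/2 \<le> r1 \<and> r1 \<le> xi2 E1 E2 F1 F2 \<and> \<phi> \<ge> phibar E1 E2 r1 \<longrightarrow> decr_on {0..1} J) \<and>
      (xi2 E1 E2 F1 F2 \<le> r1 \<and> r1 \<le> xi1 E1 E2 \<longrightarrow> incr_on {0..1} J) \<and>
      (r1 \<ge> xi1 E1 E2 \<longrightarrow>
         incr_on {alphabar E1 E2 r1<..1} J \<and> alphabar E1 E2 r1 \<in> {0..1} \<and>
         (\<forall>\<alpha>\<in>{0..1}. J (alphabar E1 E2 r1) \<le> J \<alpha>)))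
    \<and>
    (E1 < E2 \<longrightarrow>
      (r1 \<le> xi1 E1 E2 \<longrightarrow>
         incr_on {alphabar E1 E2 r1<..1} J \<and> alphabar E1 E2 r1 \<in> {0..1} \<and>
         (\<forall>\<alpha>\<in>{0..1}. J (alphabar E1 E2 r1) \<le> J \<alpha>)) \<and>
      (xi1 E1 E2 < r1 \<and> r1 \<le> xi2 E1 E2 F1 F2 \<longrightarrow> incr_on {0..1} J) \<and>
      (xi2 E1 E2 F1 F2 < r1 \<and> r1 \<le> 1/2 \<and> \<phi> < phibar E1 E2 r1 \<longrightarrow> incr_on {0..1} J) \<and>
      (xi2 E1 E2 F1 F2 < r1 \<and> r1 \<le> 1/2 \<and> \<phi> \<ge> phibar E1 E2 r1 \<longrightarrow> decr_on {0..1} J) \<and>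
      (r1 > 1/2 \<longrightarrow> decr_on {0..1} J))"
proof -
  have "J \<alpha> = \<phi>\<^sup>2 / (E1 + E2) + \<phi>\<^sup>2 * (1/E1 + 1/E2) *
      (((r1 - xi1 E1 E2) + (1/2 - r1) * \<alpha>) / (1 + \<phi> * (1/E1 + 1/E2) / 2 * \<alpha>))\<^sup>2"
    if "\<alpha> \<in> {0..1}" for \<alpha>
  proof -
    have "is_equilibrium B1 B2 C1 C2 F1 F2 \<phi> r1 r2 \<alpha> (xbar B1 B2 C1 C2 F1 F2 \<phi> r1 r2 \<alpha>)"
      using uniq that unfolding xbar_def by (metis theI')
    then show ?thesis
      using Jcost_at_equilibrium[OF pos crit r(3) E1_def E2_def] nounsat that unfolding J_def by simp
  qed
  moreover have "0 < E1" "0 < E2"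
    using pos unfolding E1_def E2_def Ecap_def by simp_all
  ultimately interpret two_route_equilibrium_cost E1 E2 F1 F2 \<phi> r1 J
    using pos(7) cap by unfold_locales auto
  show ?thesis
    using cost_shape_if_E2_le_E1 cost_shape_if_E1_less_E2 by (simp add: not_le)
qed

end
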